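(* Let $n\geq 1$, let $\alpha,\beta,d\in\mathbb{Z}$ with $1\leq d\leq n$, and consider the complete graph $K_n$ with an initial configuration $c_0$ in which $d$ of the vertices receive $\alpha$ chips and the remaining $n-d$ vertices receive $\beta$ chips. Then this configuration is tight, i.e. there exists $t\geq 0$ with $c_{t+2}=c_t$.
   Context: Diffusion process: for a finite simple graph $G$ and a chip configuration $c_t:V(G)\to\mathbb{Z}$ (negative values allowed), the next configuration is defined simultaneously for every vertex $u$ by $c_{t+1}(u)=c_t(u)-|\{w\in N(u): c_t(u)>c_t(w)\}|+|\{w\in N(u): c_t(u)<c_t(w)\}|$. A graph with initial configuration is tight if the process is eventually fixed or eventually periodic with period length $2$, equivalently $c_{t+2}=c_t$ for some $t\geq0$. *)

theory Defs
  imports Main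
begin

text \<open>A finite simple graph is given by a finite vertex set V and a symmetric,
irreflexive adjacency relation E.  Configurations are functions into int
(values outside V are irrelevant).\<close>

definition neighbours :: "'a set \<Rightarrow> ('a \<Rightarrow> 'a \<Rightarrow> bool) \<Rightarrow> 'a \<Rightarrow> 'a set" where
  "neighbours V E u = {w \<in> V. E u w}"

definition diffusion_step :: "'a set \<Rightarrow> ('a \<Rightarrow> 'a \<Rightarrow> bool) \<Rightarrow> ('a \<Rightarrow> int) \<Rightarrow> ('a \<Rightarrow> int)" where
  "diffusion_step V E c = (\<lambda>u. c u
      - int (card {w \<in> neighbours V E u. c u > c w})
      + int (card {w \<in> neighbours V E u. c u < c w}))"

definition diffusion :: "'a set \<Rightarrow> ('a \<Rightarrow> 'a \<Rightarrow> bool) \<Rightarrow> ('a \<Rightarrow> int) \<Rightarrow> nat \<Rightarrow> ('a \<Rightarrow> int)" where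
  "diffusion V E c0 t = (diffusion_step V E ^^ t) c0"

definition tight :: "'a set \<Rightarrow> ('a \<Rightarrow> 'a \<Rightarrow> bool) \<Rightarrow> ('a \<Rightarrow> int) \<Rightarrow> bool" where
  "tight V E c0 \<longleftrightarrow> (\<exists>t. \<forall>v\<in>V. diffusion V E c0 (t + 2) v = diffusion V E c0 t v)"

definition complete_adj :: "nat \<Rightarrow> nat \<Rightarrow> bool" where
  "complete_adj u v \<longleftrightarrow> u \<noteq> v"

end

theory Submission
  imports Defs
begin

text \<open>On a complete graph, a configuration taking a value \<open>a\<close> on a set \<open>D\<close> of \<open>k\<close> vertices and
a value \<open>b\<close> on the remaining \<open>m\<close> vertices stays of this shape: every vertex of \<open>D\<close> compares
itself with the \<open>m\<close> others, every other vertex with the \<open>k\<close> vertices of \<open>D\<close>. So the process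
reduces to a map on the pair \<open>(a, b)\<close>, which moves the two values towards each other by
\<open>k + m\<close> in total. Once \<open>\<bar>a - b\<bar> < k + m\<close> the values overshoot and the next step undoes
this, so the process becomes periodic with period at most 2.\<close>

definition two_level_config :: "'a set \<Rightarrow> int \<times> int \<Rightarrow> 'a \<Rightarrow> int" where
  "two_level_config D p = (\<lambda>v. if v \<in> D then fst p else snd p)"

definition two_level_step :: "nat \<Rightarrow> nat \<Rightarrow> int \<times> int \<Rightarrow> int \<times> int" where
  "two_level_step k m = (\<lambda>(a, b).
     if a > b then (a - int m, b + int k)
     else if a < b then (a + int m, b - int k) else (a, b))"

lemma diffusion_step_complete_two_level:
  assumes "finite V" and "D \<subseteq> V"
    and c: "\<And>v. v \<in> V \<Longrightarrow> c v = two_level_config D p v"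
    and v: "v \<in> V"
  shows "diffusion_step V complete_adj c v
         = two_level_config D (two_level_step (card D) (card (V - D)) p) v"
proof -
  obtain a b where p: "p = (a, b)" by (cases p)
  have nb: "neighbours V complete_adj v = V - {v}"
    unfolding neighbours_def complete_adj_def by auto
  show ?thesis
  proof (cases "v \<in> D")
    case True
    have below: "{w \<in> V - {v}. c v > c w} = (if a > b then V - D else {})"
      and above: "{w \<in> V - {v}. c v < c w} = (if a < b then V - D else {})"
      using c v True by (auto simp: p two_level_config_def)
    show ?thesis
      unfolding diffusion_step_def nb below above
      using c[OF v] True by (simp add: p two_level_config_def two_level_step_def)
  next
    case False
    have below: "{w \<in> V - {v}. c v > c w} = (if b > a then D else {})"
      and above: "{w \<in> V - {v}. c v < c w} = (if b < a then D else {})"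
      using c v False \<open>D \<subseteq> V\<close> by (auto simp: p two_level_config_def split: if_splits)
    show ?thesis
      unfolding diffusion_step_def nb below above
      using c[OF v] False by (simp add: p two_level_config_def two_level_step_def)
  qed
qed

lemma diffusion_complete_two_level:
  assumes "finite V" and "D \<subseteq> V"
    and c0: "\<And>v. v \<in> V \<Longrightarrow> c0 v = two_level_config D p v"
    and "v \<in> V"
  shows "diffusion V complete_adj c0 t v
         = two_level_config D ((two_level_step (card D) (card (V - D)) ^^ t) p) v"
  using \<open>v \<in> V\<close>
proof (induction t arbitrary: v)
  case 0
  then show ?case using c0 by (simp add: diffusion_def)
next
  case (Suc t)
  then show ?case
    using diffusion_step_complete_two_level[OF assms(1,2) Suc.IH]
    by (simp add: diffusion_def)
qed

lemma two_level_step_twice: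
  assumes "\<bar>a - b\<bar> < int (k + m)"
  shows "(two_level_step k m ^^ 2) (a, b) = (a, b)"
  using assms by (auto simp: two_level_step_def numeral_2_eq_2)

lemma two_level_step_gap_decreases:
  assumes "0 < k + m" and "int (k + m) \<le> \<bar>a - b\<bar>"
  shows "\<bar>fst (two_level_step k m (a, b)) - snd (two_level_step k m (a, b))\<bar> < \<bar>a - b\<bar>"
  using assms by (auto simp: two_level_step_def)

lemma two_level_step_eventually_periodic:
  assumes "0 < k + m"
  shows "\<exists>t. (two_level_step k m ^^ (t + 2)) p = (two_level_step k m ^^ t) p"
proof (induction "nat \<bar>fst p - snd p\<bar>" arbitrary: p rule: less_induct)
  case less
  obtain a b where p: "p = (a, b)" by (cases p)
  show ?case
  proof (cases "\<bar>a - b\<bar> < int (k + m)")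
    case True
    then have "(two_level_step k m ^^ (0 + 2)) p = (two_level_step k m ^^ 0) p"
      using two_level_step_twice[OF True] by (simp add: p numeral_2_eq_2)
    then show ?thesis by blast
  next
    case False
    then have "nat \<bar>fst (two_level_step k m p) - snd (two_level_step k m p)\<bar> < nat \<bar>fst p - snd p\<bar>"
      using two_level_step_gap_decreases[OF assms, of a b] by (simp add: p)
    then obtain t where
      "(two_level_step k m ^^ (t + 2)) (two_level_step k m p)
       = (two_level_step k m ^^ t) (two_level_step k m p)"
      using less.hyps by blast
    then have "(two_level_step k m ^^ (Suc t + 2)) p = (two_level_step k m ^^ Suc t) p"
      by (simp only: funpow_Suc_right o_apply add_Suc)
    then show ?thesis by blast
  qed
qed

theorem theorem17:
  fixes n d :: nat and \<alpha> \<beta> :: int and D :: "nat set" and c0 :: "nat \<Rightarrow> int"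
  assumes "n \<ge> 1" and "1 \<le> d" and "d \<le> n"
    and "D \<subseteq> {0..<n}" and "card D = d"
    and "\<And>v. v \<in> D \<Longrightarrow> c0 v = \<alpha>"
    and "\<And>v. v \<in> {0..<n} - D \<Longrightarrow> c0 v = \<beta>"
  shows "tight {0..<n} complete_adj c0"
proof -
  let ?f = "two_level_step (card D) (card ({0..<n} - D))"
  have c0: "c0 v = two_level_config D (\<alpha>, \<beta>) v" if "v \<in> {0..<n}" for v
    using assms(6,7) that by (auto simp: two_level_config_def)
  have "0 < card D + card ({0..<n} - D)"
    using assms(2,5) by simp
  from two_level_step_eventually_periodic[OF this]
  obtain t where t: "(?f ^^ (t + 2)) (\<alpha>, \<beta>) = (?f ^^ t) (\<alpha>, \<beta>)" ..
  have "diffusion {0..<n} complete_adj c0 (t + 2) v = diffusion {0..<n} complete_adj c0 t v"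
    if "v \<in> {0..<n}" for v
    using diffusion_complete_two_level[OF _ assms(4) c0 that, of "t + 2"]
      diffusion_complete_two_level[OF _ assms(4) c0 that, of t]
    by (simp only: t finite_atLeastLessThan simp_thms)
  then show ?thesis
    unfolding tight_def by blast
qed

end
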